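(* Suppose the matrix $A$ is diagonalisable with $2N$ distinct eigenvalues $\lambda_k^{(l)}$, $k=0,\dots,N-1$, $l=1,2$, and suppose $\gamma>0$ and $\gamma/2+\beta+T\alpha>1/T$. Then $\mathrm{Re}(\lambda_k^{(l)})\le0$ for all $k=0,\dots,N-1$ and $l=1,2$.
   Context: Parameters: $N>2$, $\alpha\ge0$, $\beta\ge0$, $\gamma>0$, $T>0$. $A\in\mathbb R^{2N\times 2N}$ is the drift matrix of the linear system in coordinates $(x_1,y_1,\dots,x_N,y_N)$ given, with cyclic indices ($x_{N+1}=x_1$, $y_{N+1}=y_1$, $x_0=x_N$), by $\dot x_n=y_n$, $\dot y_n=\gamma\big(\tfrac1T(x_{n+1}-x_n)-y_n\big)+\beta(y_{n+1}-y_n)+\alpha(x_{n+1}-2x_n+x_{n-1})$. *)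

theory Defs
  imports Complex_Main "Jordan_Normal_Form.Matrix" "Jordan_Normal_Form.Char_Poly"
begin

text \<open>Drift matrix A in coordinates (x_1,y_1,...,x_N,y_N), 0-indexed:
  x_{n+1} sits at index 2n, y_{n+1} at index 2n+1 (n = 0..N-1), cyclic indices mod N.
  Row of x_n: dx_n/dt = y_n.
  Row of y_n: gamma((x_{n+1}-x_n)/T - y_n) + beta(y_{n+1}-y_n) + alpha(x_{n+1}-2x_n+x_{n-1}).\<close>

definition drift_matrix :: "nat \<Rightarrow> real \<Rightarrow> real \<Rightarrow> real \<Rightarrow> real \<Rightarrow> real mat" where
  "drift_matrix N \<alpha> \<beta> \<gamma> T = mat (2*N) (2*N) (\<lambda>(i,j).
     let n = i div 2; m = j div 2; nxt = (n + 1) mod N; prv = (n + N - 1) mod N in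
     if even i then (if j = i + 1 then 1 else 0)
     else if even j then
       (if m = nxt then \<gamma> / T + \<alpha> else 0)
       + (if m = n then - \<gamma> / T - 2 * \<alpha> else 0)
       + (if m = prv then \<alpha> else 0)
     else
       (if m = n then - \<gamma> - \<beta> else 0)
       + (if m = nxt then \<beta> else 0))"

definition diagonalisable :: "complex mat \<Rightarrow> bool" where
  "diagonalisable M = (\<exists>D. diagonal_mat D \<and> similar_mat M D)"

end

theory Submission
  imports Defs "HOL-Analysis.Convex"
begin

text \<open>An eigenvector of the drift matrix with eigenvalue \<open>z\<close> has velocities \<open>y\<^sub>n = z x\<^sub>n\<close>,
  so its positions satisfy the cyclic second-order recurrence
  \<open>z\<^sup>2 x\<^sub>n = (\<gamma>/T) \<Delta>x\<^sub>n + \<alpha> \<Delta>\<^sup>2x\<^sub>n - \<gamma> z x\<^sub>n + \<beta> z \<Delta>x\<^sub>n\<close>.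
  Pairing with \<open>x\<^sub>n\<close> and summing over the ring, the quotient
  \<open>d = (\<Sum> \<Delta>x\<^sub>n cnj x\<^sub>n) / (\<Sum> \<bar>x\<^sub>n\<bar>\<^sup>2)\<close> satisfies \<open>z\<^sup>2 + \<gamma> z = (\<gamma>/T + \<beta> z) d + 2 \<alpha> Re d\<close>,
  and \<open>d\<close> lies in the disc \<open>\<bar>d + 1\<bar> \<le> 1\<close>. Eliminating \<open>Im z\<close> from the real and imaginary
  parts of this relation leaves a polynomial inequality in \<open>Re z\<close> which, under the damping
  margin \<open>1/T \<le> \<gamma>/2 + \<beta> + T\<alpha>\<close>, has no solution with \<open>Re z > 0\<close>.\<close>

lemma imaginary_part_elimination:
  fixes u v e b g K p q :: real
  assumes re: "u\<^sup>2 - v\<^sup>2 + g*u + K*e + q*u*e + q*b*v + 2*p*e = 0"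
    and im: "v*(2*u+g+q*e) = b*(K+q*u)"
  shows "b\<^sup>2 * (K+q*u) * (K - q*u - q*g - q\<^sup>2*e) = (2*u+g+q*e)\<^sup>2 * (u\<^sup>2 + (g+q*e)*u + (K+2*p)*e)"
proof -
  define s where "s = 2*u+g+q*e"
  define W where "W = u\<^sup>2 + (g+q*e)*u + (K+2*p)*e"
  have "s\<^sup>2 * (u\<^sup>2 - v\<^sup>2 + g*u + K*e + q*u*e + q*b*v + 2*p*e) = 0" using re by simp
  then have "s\<^sup>2 * W - (v*s)\<^sup>2 + q*b*(v*s)*s = 0" unfolding W_def s_def
    by (simp add: algebra_simps power2_eq_square)
  then have "s\<^sup>2 * W - (b*(K+q*u))\<^sup>2 + q*b*(b*(K+q*u))*s = 0" using im unfolding s_def by simp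
  then show ?thesis unfolding s_def W_def by (simp add: algebra_simps power2_eq_square)
qed

lemma disk_term_bound:
  fixes u e b g K p q :: real
  assumes g: "g \<ge> 0" and K: "K \<ge> 0" and p: "p \<ge> 0" and q: "q \<ge> 0" and u: "u \<ge> 0"
    and cond: "2*K*(K - q*g) \<le> g\<^sup>2*(K+2*p)"
    and disk: "e\<^sup>2 + b\<^sup>2 \<le> 2*e"
  shows "b\<^sup>2 * (K+q*u) * (K - q*u - q*g - q\<^sup>2*e) \<le> (g+q*e)\<^sup>2 * (K+2*p) * e"
proof -
  have b2: "b\<^sup>2 \<le> e*(2-e)" using disk by (simp add: algebra_simps power2_eq_square)
  have ee: "e\<^sup>2 \<le> 2*e" using disk zero_le_power2[of b] by linarith
  then have e0: "e \<ge> 0" using zero_le_power2[of e] by linarith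
  have e2: "e \<le> 2"
  proof (rule ccontr)
    assume "\<not> e \<le> 2"
    then have "2*e < e*e" by (simp add: mult_strict_right_mono)
    then show False using ee by (simp add: power2_eq_square)
  qed
  define c where "c = K - q*g - q\<^sup>2*e"
  have c_le: "c \<le> K - q*g" unfolding c_def using q e0 by simp
  have rhs0: "(g+q*e)\<^sup>2 * (K+2*p) * e \<ge> 0" using K p e0 by simp
  show ?thesis
  proof (cases "K - q*u - q*g - q\<^sup>2*e \<le> 0")
    case True
    then show ?thesis using rhs0 K q u by (smt (verit) mult_nonneg_nonpos zero_le_power2 mult_nonneg_nonneg)
  next
    case False
    have "(K+q*u) * (K - q*u - q*g - q\<^sup>2*e) = K*c + q*u*(c - K) - q\<^sup>2*u\<^sup>2"
      unfolding c_def by (simp add: algebra_simps power2_eq_square)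
    also have "\<dots> \<le> K*c" using c_le q u g by (smt (verit) mult_nonneg_nonneg mult_nonneg_nonpos zero_le_power2)
    finally have mh: "(K+q*u) * (K - q*u - q*g - q\<^sup>2*e) \<le> K*c" .
    have "(2-e)*(K*c) \<le> (2-e)*(K*(K - q*g))"
      using c_le K e2 by (intro mult_left_mono) auto
    also have "\<dots> \<le> g\<^sup>2*(K+2*p)"
    proof (cases "K - q*g \<le> 0")
      case True
      then have "(2-e)*(K*(K - q*g)) \<le> 0" using K e2 by (simp add: mult_nonneg_nonpos)
      then show ?thesis using K p by (smt (verit) zero_le_power2 mult_nonneg_nonneg)
    next
      case False
      then have "K*(K - q*g) \<ge> 0" using K by simp
      then have "(2-e)*(K*(K - q*g)) \<le> 2*(K*(K - q*g))" using e0 by (intro mult_right_mono) auto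
      then show ?thesis using cond by linarith
    qed
    also have "\<dots> \<le> (g+q*e)\<^sup>2*(K+2*p)" using g q e0 K p
      by (intro mult_right_mono power_mono) auto
    finally have scaled: "(2-e)*(K*c) \<le> (g+q*e)\<^sup>2*(K+2*p)" .
    have "(K+q*u) * (K - q*u - q*g - q\<^sup>2*e) \<ge> 0" using False K q u by simp
    then have "b\<^sup>2 * ((K+q*u) * (K - q*u - q*g - q\<^sup>2*e)) \<le> (e*(2-e)) * ((K+q*u) * (K - q*u - q*g - q\<^sup>2*e))"
      by (rule mult_right_mono[OF b2])
    also have "\<dots> \<le> (e*(2-e)) * (K*c)" using mh e0 e2 by (intro mult_left_mono) auto
    also have "\<dots> \<le> e * ((g+q*e)\<^sup>2*(K+2*p))" using scaled e0 by (simp add: mult.assoc mult_left_mono)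
    finally show ?thesis by (simp add: algebra_simps)
  qed
qed

lemma Re_nonpos_of_disk_pencil:
  fixes z d :: complex and g K p q :: real
  assumes g: "g \<ge> 0" and K: "K \<ge> 0" and p: "p \<ge> 0" and q: "q \<ge> 0"
    and cond: "2*K*(K - q*g) \<le> g\<^sup>2*(K+2*p)"
    and disk: "(cmod d)\<^sup>2 \<le> - 2 * Re d"
    and eq: "z\<^sup>2 + of_real g * z = (of_real K + of_real q * z) * d + of_real (2 * p * Re d)"
  shows "Re z \<le> 0"
proof (rule ccontr)
  assume "\<not> Re z \<le> 0"
  then have u: "Re z > 0" by simp
  define e where "e = - Re d"
  have e0: "e \<ge> 0" using disk unfolding e_def by (smt (verit) zero_le_power2)
  have re: "(Re z)\<^sup>2 - (Im z)\<^sup>2 + g*Re z + K*e + q*Re z*e + q*Im d*Im z + 2*p*e = 0"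
    using arg_cong[OF eq, of Re] unfolding e_def by (simp add: power2_eq_square algebra_simps)
  have im: "Im z*(2*Re z+g+q*e) = Im d*(K+q*Re z)"
    using arg_cong[OF eq, of Im] unfolding e_def by (simp add: power2_eq_square algebra_simps)
  have "e\<^sup>2 + (Im d)\<^sup>2 \<le> 2*e" using disk unfolding e_def cmod_power2 by simp
  from disk_term_bound[OF g K p q less_imp_le[OF u] cond this]
  have "(2*Re z+g+q*e)\<^sup>2 * ((Re z)\<^sup>2 + (g+q*e)*Re z + (K+2*p)*e) \<le> (g+q*e)\<^sup>2 * (K+2*p) * e"
    unfolding imaginary_part_elimination[OF re im] .
  moreover have "(2*Re z+g+q*e)\<^sup>2 * ((Re z)\<^sup>2 + (g+q*e)*Re z + (K+2*p)*e)
      > (g+q*e)\<^sup>2 * (K+2*p) * e"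
  proof -
    have s: "(g+q*e)\<^sup>2 \<le> (2*Re z+g+q*e)\<^sup>2" using u g q e0 by (intro power_mono) auto
    have "(2*Re z+g+q*e)\<^sup>2 * ((Re z)\<^sup>2 + (g+q*e)*Re z + (K+2*p)*e)
        \<ge> (2*Re z+g+q*e)\<^sup>2 * ((Re z)\<^sup>2 + (K+2*p)*e)"
      using u g q e0 by (intro mult_left_mono) auto
    moreover have "2*Re z+g+q*e > 0" using u g q e0 by (simp add: add_pos_nonneg)
    then have "(2*Re z+g+q*e)\<^sup>2 * (Re z)\<^sup>2 > 0" using u by simp
    moreover have "(g+q*e)\<^sup>2 * (K+2*p) * e \<le> (2*Re z+g+q*e)\<^sup>2 * ((K+2*p)*e)"
      unfolding mult.assoc using s K p e0 by (intro mult_right_mono) auto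
    ultimately show ?thesis unfolding distrib_left by linarith
  qed
  ultimately show False by simp
qed

lemma cyclic_pred_succ:
  fixes n N :: nat
  assumes "n < N"
  shows "((n+1) mod N + N - 1) mod N = n"
proof (cases "n+1 < N")
  case True
  then show ?thesis using assms by simp
next
  case False
  with assms have "n+1 = N" by simp
  then show ?thesis by auto
qed

lemma cyclic_succ_pred:
  fixes n N :: nat
  assumes "n < N"
  shows "((n+N-1) mod N + 1) mod N = n"
proof (cases "n = 0")
  case True
  then show ?thesis using assms by simp
next
  case False
  then obtain m where "n = Suc m" by (cases n) auto
  then show ?thesis using assms by simp
qed

lemma sum_cyclic_succ:
  fixes N :: nat
  assumes "0 < N"
  shows "(\<Sum>n<N. f ((n+1) mod N)) = (\<Sum>n<N. f n)"
proof -
  have "bij_betw (\<lambda>n. (n+1) mod N) {..<N} {..<N}"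
    by (rule bij_betw_byWitness[where f'="\<lambda>n. (n+N-1) mod N"])
       (use assms cyclic_pred_succ cyclic_succ_pred in auto)
  then show ?thesis by (rule sum.reindex_bij_betw)
qed

lemma sum_cyclic_pred_mult:
  fixes N :: nat and f g :: "nat \<Rightarrow> 'a::comm_semiring_1"
  assumes "0 < N"
  shows "(\<Sum>n<N. f ((n+N-1) mod N) * g n) = (\<Sum>n<N. f n * g ((n+1) mod N))"
proof -
  have "(\<Sum>n<N. f ((n+N-1) mod N) * g n)
      = (\<Sum>n<N. f (((n+1) mod N + N - 1) mod N) * g ((n+1) mod N))"
    by (rule sum_cyclic_succ[OF assms, symmetric])
  also have "\<dots> = (\<Sum>n<N. f n * g ((n+1) mod N))"
    by (rule sum.cong) (auto simp only: lessThan_iff cyclic_pred_succ)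
  finally show ?thesis .
qed

lemma cyclic_Laplacian_form:
  fixes x :: "nat \<Rightarrow> complex" and N :: nat
  assumes "0 < N"
  shows "(\<Sum>n<N. (x ((n+1) mod N) - 2 * x n + x ((n+N-1) mod N)) * cnj (x n))
    = (\<Sum>n<N. (x ((n+1) mod N) - x n) * cnj (x n)) + cnj (\<Sum>n<N. (x ((n+1) mod N) - x n) * cnj (x n))"
proof -
  have "(\<Sum>n<N. (x ((n+1) mod N) - 2 * x n + x ((n+N-1) mod N)) * cnj (x n))
      = (\<Sum>n<N. (x ((n+1) mod N) - x n) * cnj (x n))
        + (\<Sum>n<N. x ((n+N-1) mod N) * cnj (x n) - x n * cnj (x n))"
    by (simp add: algebra_simps sum.distrib sum_subtractf sum_distrib_left sum_distrib_right)
  also have "(\<Sum>n<N. x ((n+N-1) mod N) * cnj (x n) - x n * cnj (x n))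
      = cnj (\<Sum>n<N. (x ((n+1) mod N) - x n) * cnj (x n))"
    unfolding sum_subtractf sum_cyclic_pred_mult[OF assms, of x "\<lambda>n. cnj (x n)"]
    by (simp add: algebra_simps sum_subtractf)
  finally show ?thesis .
qed

lemma cyclic_difference_form_add_cnj:
  fixes x :: "nat \<Rightarrow> complex" and N :: nat
  assumes "0 < N"
  shows "(\<Sum>n<N. (x ((n+1) mod N) - x n) * cnj (x n)) + cnj (\<Sum>n<N. (x ((n+1) mod N) - x n) * cnj (x n))
    = - of_real (\<Sum>n<N. (cmod (x ((n+1) mod N) - x n))\<^sup>2)"
proof -
  have "(\<Sum>n<N. x ((n+1) mod N) * cnj (x ((n+1) mod N))) = (\<Sum>n<N. x n * cnj (x n))"
    by (rule sum_cyclic_succ[OF assms])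
  then have "(\<Sum>n<N. (x ((n+1) mod N) - x n) * cnj (x n) + x n * cnj (x ((n+1) mod N) - x n))
      = - (\<Sum>n<N. (x ((n+1) mod N) - x n) * cnj (x ((n+1) mod N) - x n))"
    by (simp add: algebra_simps sum.distrib sum_subtractf sum_distrib_left sum_distrib_right)
  then show ?thesis
    unfolding of_real_sum complex_norm_square cnj_sum by (simp add: sum.distrib mult.commute)
qed

lemma cmod_sum_mult_cnj_le:
  fixes a b :: "'i \<Rightarrow> complex"
  shows "(cmod (\<Sum>i\<in>I. a i * cnj (b i)))\<^sup>2 \<le> (\<Sum>i\<in>I. (cmod (a i))\<^sup>2) * (\<Sum>i\<in>I. (cmod (b i))\<^sup>2)"
proof -
  have "cmod (\<Sum>i\<in>I. a i * cnj (b i)) \<le> (\<Sum>i\<in>I. cmod (a i) * cmod (b i))"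
    using norm_sum[of "\<lambda>i. a i * cnj (b i)" I] by (simp add: norm_mult)
  then have "(cmod (\<Sum>i\<in>I. a i * cnj (b i)))\<^sup>2 \<le> (\<Sum>i\<in>I. cmod (a i) * cmod (b i))\<^sup>2"
    by (intro power_mono) simp_all
  also have "\<dots> \<le> (\<Sum>i\<in>I. (cmod (a i))\<^sup>2) * (\<Sum>i\<in>I. (cmod (b i))\<^sup>2)"
    by (rule Cauchy_Schwarz_ineq_sum)
  finally show ?thesis .
qed

lemma cyclic_recurrence_summed:
  fixes x :: "nat \<Rightarrow> complex" and z :: complex and N :: nat and K a g q :: real
  assumes N: "0 < N"
    and rec: "\<And>n. n < N \<Longrightarrow> z\<^sup>2 * x n = of_real K * (x ((n+1) mod N) - x n)
        + of_real a * (x ((n+1) mod N) - 2 * x n + x ((n+N-1) mod N))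
        - of_real g * z * x n + of_real q * z * (x ((n+1) mod N) - x n)"
  shows "(z\<^sup>2 + of_real g * z) * of_real (\<Sum>n<N. (cmod (x n))\<^sup>2)
    = (of_real K + of_real q * z) * (\<Sum>n<N. (x ((n+1) mod N) - x n) * cnj (x n))
      + of_real (2 * a * Re (\<Sum>n<N. (x ((n+1) mod N) - x n) * cnj (x n)))"
proof -
  define S where "S = (\<Sum>n<N. (cmod (x n))\<^sup>2)"
  define D where "D = (\<Sum>n<N. (x ((n+1) mod N) - x n) * cnj (x n))"
  have "z\<^sup>2 * of_real S = (\<Sum>n<N. (z\<^sup>2 * x n) * cnj (x n))"
    unfolding S_def of_real_sum complex_norm_square by (simp add: sum_distrib_left mult.assoc)
  also have "\<dots> = (\<Sum>n<N. of_real K * ((x ((n+1) mod N) - x n) * cnj (x n))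
      + of_real a * ((x ((n+1) mod N) - 2 * x n + x ((n+N-1) mod N)) * cnj (x n))
      - of_real g * z * of_real ((cmod (x n))\<^sup>2) + of_real q * z * ((x ((n+1) mod N) - x n) * cnj (x n)))"
  proof (rule sum.cong[OF refl])
    fix n assume "n \<in> {..<N}"
    then show "(z\<^sup>2 * x n) * cnj (x n) = of_real K * ((x ((n+1) mod N) - x n) * cnj (x n))
      + of_real a * ((x ((n+1) mod N) - 2 * x n + x ((n+N-1) mod N)) * cnj (x n))
      - of_real g * z * of_real ((cmod (x n))\<^sup>2) + of_real q * z * ((x ((n+1) mod N) - x n) * cnj (x n))"
      unfolding complex_norm_square by (simp only: rec lessThan_iff) (simp add: algebra_simps)
  qed
  also have "\<dots> = of_real K * D + of_real a * (D + cnj D) - of_real g * z * of_real S + of_real q * z * D"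
    unfolding D_def S_def cyclic_Laplacian_form[OF N, symmetric] of_real_sum
    by (simp add: sum.distrib sum_subtractf sum_distrib_left)
  finally have "z\<^sup>2 * of_real S
      = of_real K * D + of_real a * of_real (2 * Re D) - of_real g * z * of_real S + of_real q * z * D"
    by (simp only: complex_add_cnj)
  then show ?thesis unfolding S_def[symmetric] D_def[symmetric] by (simp add: algebra_simps)
qed

lemma cyclic_recurrence_disk_quotient:
  fixes x :: "nat \<Rightarrow> complex" and z :: complex and N :: nat and K a g q :: real
  assumes nonzero: "\<exists>n<N. x n \<noteq> 0"
    and rec: "\<And>n. n < N \<Longrightarrow> z\<^sup>2 * x n = of_real K * (x ((n+1) mod N) - x n)
        + of_real a * (x ((n+1) mod N) - 2 * x n + x ((n+N-1) mod N))
        - of_real g * z * x n + of_real q * z * (x ((n+1) mod N) - x n)"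
  obtains d where "(cmod d)\<^sup>2 \<le> - 2 * Re d"
    and "z\<^sup>2 + of_real g * z = (of_real K + of_real q * z) * d + of_real (2 * a * Re d)"
proof -
  from nonzero have N: "0 < N" by auto
  define S where "S = (\<Sum>n<N. (cmod (x n))\<^sup>2)"
  define E where "E = (\<Sum>n<N. (cmod (x ((n+1) mod N) - x n))\<^sup>2)"
  define D where "D = (\<Sum>n<N. (x ((n+1) mod N) - x n) * cnj (x n))"
  have S0: "S > 0"
  proof -
    obtain m where "m < N" "x m \<noteq> 0" using nonzero by blast
    then show ?thesis unfolding S_def by (intro sum_pos2[of _ m]) auto
  qed
  have ReD: "2 * Re D = - E"
  proof -
    have "complex_of_real (2 * Re D) = complex_of_real (- E)"
      unfolding D_def E_def complex_add_cnj[symmetric] of_real_minus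
      by (rule cyclic_difference_form_add_cnj[OF N])
    then show ?thesis by (simp only: of_real_eq_iff)
  qed
  have CS: "(cmod D)\<^sup>2 \<le> E * S"
    unfolding D_def E_def S_def by (rule cmod_sum_mult_cnj_le)
  have summed: "(z\<^sup>2 + of_real g * z) * of_real S = (of_real K + of_real q * z) * D + of_real (2 * a * Re D)"
    unfolding S_def D_def by (rule cyclic_recurrence_summed[OF N rec])
  define d where "d = D / of_real S"
  show thesis
  proof (rule that)
    have "(cmod d)\<^sup>2 = (cmod D)\<^sup>2 / S\<^sup>2" unfolding d_def using S0 by (simp add: norm_divide power_divide)
    also have "\<dots> \<le> (E * S) / S\<^sup>2" using CS S0 by (simp add: divide_right_mono)
    also have "\<dots> = - 2 * Re d" unfolding d_def using ReD S0 by (simp add: power2_eq_square)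
    finally show "(cmod d)\<^sup>2 \<le> - 2 * Re d" .
    show "z\<^sup>2 + of_real g * z = (of_real K + of_real q * z) * d + of_real (2 * a * Re d)"
      using summed S0 unfolding d_def by (simp add: field_simps)
  qed
qed

lemma sum_lessThan_double:
  fixes f :: "nat \<Rightarrow> 'a::comm_monoid_add"
  shows "(\<Sum>j<2*N. f j) = (\<Sum>m<N. f (2*m) + f (2*m+1))"
  by (induction N) (simp_all add: ac_simps)

lemma sum_if_eq_mult:
  fixes c :: "'a::semiring_0" and a N :: nat
  assumes "a < N"
  shows "(\<Sum>m<N. (if m = a then c else 0) * f m) = c * f a"
proof -
  have "(if m = a then c else 0) * f m = (if m = a then c * f a else 0)" for m
    by simp
  then show ?thesis using assms by simp
qed

lemma drift_matrix_carrier: "drift_matrix N \<alpha> \<beta> \<gamma> T \<in> carrier_mat (2*N) (2*N)"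
  by (simp add: drift_matrix_def)

lemma drift_matrix_even_row:
  assumes "n < N" "m < N"
  shows "drift_matrix N \<alpha> \<beta> \<gamma> T $$ (2*n, 2*m) = 0"
    and "drift_matrix N \<alpha> \<beta> \<gamma> T $$ (2*n, 2*m+1) = (if m = n then 1 else 0)"
  using assms by (simp_all add: drift_matrix_def double_not_eq_Suc_double)

lemma drift_matrix_odd_row:
  assumes "n < N" "m < N"
  shows "drift_matrix N \<alpha> \<beta> \<gamma> T $$ (2*n+1, 2*m) = (if m = (n+1) mod N then \<gamma>/T + \<alpha> else 0)
      + (if m = n then - \<gamma>/T - 2*\<alpha> else 0) + (if m = (n+N-1) mod N then \<alpha> else 0)"
    and "drift_matrix N \<alpha> \<beta> \<gamma> T $$ (2*n+1, 2*m+1) = (if m = n then - \<gamma> - \<beta> else 0)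
      + (if m = (n+1) mod N then \<beta> else 0)"
  using assms by (simp_all add: drift_matrix_def Let_def)

lemma mult_mat_vec_of_real_pairs:
  fixes A :: "real mat" and w :: "complex vec"
  assumes "A \<in> carrier_mat (2*N) (2*N)" "dim_vec w = 2*N" "i < 2*N"
  shows "(map_mat complex_of_real A *\<^sub>v w) $ i
    = (\<Sum>m<N. of_real (A $$ (i, 2*m)) * w $ (2*m) + of_real (A $$ (i, 2*m+1)) * w $ (2*m+1))"
proof -
  have "(map_mat complex_of_real A *\<^sub>v w) $ i = (\<Sum>j<2*N. of_real (A $$ (i, j)) * w $ j)"
    using assms by (auto simp: scalar_prod_def atLeast0LessThan intro!: sum.cong)
  then show ?thesis by (simp only: sum_lessThan_double)
qed

lemma drift_matrix_mult_vec_even: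
  fixes w :: "complex vec"
  assumes n: "n < N" and w: "dim_vec w = 2*N"
  shows "(map_mat complex_of_real (drift_matrix N \<alpha> \<beta> \<gamma> T) *\<^sub>v w) $ (2*n) = w $ (2*n+1)"
proof -
  have i: "2*n < 2*N" using n by simp
  have "(map_mat complex_of_real (drift_matrix N \<alpha> \<beta> \<gamma> T) *\<^sub>v w) $ (2*n)
      = (\<Sum>m<N. (if m = n then 1 else 0) * w $ (2*m+1))"
    unfolding mult_mat_vec_of_real_pairs[OF drift_matrix_carrier w i]
  proof (intro sum.cong refl)
    fix m assume "m \<in> {..<N}"
    then have m: "m < N" by simp
    show "of_real (drift_matrix N \<alpha> \<beta> \<gamma> T $$ (2*n, 2*m)) * w $ (2*m)
        + of_real (drift_matrix N \<alpha> \<beta> \<gamma> T $$ (2*n, 2*m+1)) * w $ (2*m+1)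
        = (if m = n then 1 else 0) * w $ (2*m+1)"
      unfolding drift_matrix_even_row[OF n m] by simp
  qed
  also have "\<dots> = 1 * w $ (2*n+1)" by (rule sum_if_eq_mult[OF n])
  finally show ?thesis by simp
qed

lemma drift_matrix_mult_vec_odd:
  fixes w :: "complex vec"
  assumes n: "n < N" and w: "dim_vec w = 2*N"
  shows "(map_mat complex_of_real (drift_matrix N \<alpha> \<beta> \<gamma> T) *\<^sub>v w) $ (2*n+1)
    = of_real (\<gamma>/T + \<alpha>) * w $ (2*((n+1) mod N)) - of_real (\<gamma>/T + 2*\<alpha>) * w $ (2*n)
      + of_real \<alpha> * w $ (2*((n+N-1) mod N)) - of_real (\<gamma> + \<beta>) * w $ (2*n+1)
      + of_real \<beta> * w $ (2*((n+1) mod N)+1)"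
proof -
  have N: "0 < N" and i: "2*n+1 < 2*N" using n by simp_all
  have "(map_mat complex_of_real (drift_matrix N \<alpha> \<beta> \<gamma> T) *\<^sub>v w) $ (2*n+1)
      = (\<Sum>m<N. (if m = (n+1) mod N then of_real (\<gamma>/T + \<alpha>) else 0) * w $ (2*m))
      + (\<Sum>m<N. (if m = n then - of_real (\<gamma>/T + 2*\<alpha>) else 0) * w $ (2*m))
      + (\<Sum>m<N. (if m = (n+N-1) mod N then of_real \<alpha> else 0) * w $ (2*m))
      + (\<Sum>m<N. (if m = n then - of_real (\<gamma> + \<beta>) else 0) * w $ (2*m+1))
      + (\<Sum>m<N. (if m = (n+1) mod N then of_real \<beta> else 0) * w $ (2*m+1))"
    unfolding mult_mat_vec_of_real_pairs[OF drift_matrix_carrier w i] sum.distrib[symmetric]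
  proof (intro sum.cong refl)
    fix m assume "m \<in> {..<N}"
    then have m: "m < N" by simp
    show "of_real (drift_matrix N \<alpha> \<beta> \<gamma> T $$ (2*n+1, 2*m)) * w $ (2*m)
        + of_real (drift_matrix N \<alpha> \<beta> \<gamma> T $$ (2*n+1, 2*m+1)) * w $ (2*m+1)
      = (if m = (n+1) mod N then of_real (\<gamma>/T + \<alpha>) else 0) * w $ (2*m)
      + (if m = n then - of_real (\<gamma>/T + 2*\<alpha>) else 0) * w $ (2*m)
      + (if m = (n+N-1) mod N then of_real \<alpha> else 0) * w $ (2*m)
      + (if m = n then - of_real (\<gamma> + \<beta>) else 0) * w $ (2*m+1)
      + (if m = (n+1) mod N then of_real \<beta> else 0) * w $ (2*m+1)"
      unfolding drift_matrix_odd_row[OF n m] by (simp add: distrib_right)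
  qed
  also have "\<dots> = of_real (\<gamma>/T + \<alpha>) * w $ (2*((n+1) mod N)) - of_real (\<gamma>/T + 2*\<alpha>) * w $ (2*n)
      + of_real \<alpha> * w $ (2*((n+N-1) mod N)) - of_real (\<gamma> + \<beta>) * w $ (2*n+1)
      + of_real \<beta> * w $ (2*((n+1) mod N)+1)"
    using N n by (simp only: sum_if_eq_mult mod_less_divisor) (simp add: algebra_simps)
  finally show ?thesis .
qed

lemma drift_matrix_eigenvalue_recurrence:
  assumes "eigenvalue (map_mat complex_of_real (drift_matrix N \<alpha> \<beta> \<gamma> T)) z"
  obtains x :: "nat \<Rightarrow> complex" where "\<exists>n<N. x n \<noteq> 0"
    and "\<And>n. n < N \<Longrightarrow> z\<^sup>2 * x n = of_real (\<gamma>/T) * (x ((n+1) mod N) - x n)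
        + of_real \<alpha> * (x ((n+1) mod N) - 2 * x n + x ((n+N-1) mod N))
        - of_real \<gamma> * z * x n + of_real \<beta> * z * (x ((n+1) mod N) - x n)"
proof -
  let ?M = "map_mat complex_of_real (drift_matrix N \<alpha> \<beta> \<gamma> T)"
  obtain w where w: "w \<in> carrier_vec (2*N)" "w \<noteq> 0\<^sub>v (2*N)" and eig: "?M *\<^sub>v w = z \<cdot>\<^sub>v w"
    using assms drift_matrix_carrier[of N \<alpha> \<beta> \<gamma> T] unfolding eigenvalue_def eigenvector_def by auto
  have dim: "dim_vec w = 2*N" using w(1) by simp
  have eig_at: "(?M *\<^sub>v w) $ i = z * w $ i" if "i < 2*N" for i
    using eig that dim by simp
  define x where "x n = w $ (2*n)" for n
  have velocity: "w $ (2*n+1) = z * x n" if "n < N" for n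
    using drift_matrix_mult_vec_even[OF that dim] eig_at[of "2*n"] that unfolding x_def by simp
  show thesis
  proof (rule that)
    show "\<exists>n<N. x n \<noteq> 0"
    proof (rule ccontr)
      assume "\<not> (\<exists>n<N. x n \<noteq> 0)"
      then have "w $ j = 0" if "j < 2*N" for j
        using that velocity[of "j div 2"] unfolding x_def
        by (cases "even j") (auto elim!: evenE oddE)
      then have "w = 0\<^sub>v (2*N)" using dim by (intro eq_vecI) auto
      with w(2) show False ..
    qed
  next
    fix n assume n: "n < N"
    then have N: "0 < N" by simp
    have "z * w $ (2*n+1) = (?M *\<^sub>v w) $ (2*n+1)" using eig_at n by simp
    also have "\<dots> = of_real (\<gamma>/T + \<alpha>) * w $ (2*((n+1) mod N)) - of_real (\<gamma>/T + 2*\<alpha>) * w $ (2*n)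
      + of_real \<alpha> * w $ (2*((n+N-1) mod N)) - of_real (\<gamma> + \<beta>) * w $ (2*n+1)
      + of_real \<beta> * w $ (2*((n+1) mod N)+1)"
      by (rule drift_matrix_mult_vec_odd[OF n dim])
    finally show "z\<^sup>2 * x n = of_real (\<gamma>/T) * (x ((n+1) mod N) - x n)
        + of_real \<alpha> * (x ((n+1) mod N) - 2 * x n + x ((n+N-1) mod N))
        - of_real \<gamma> * z * x n + of_real \<beta> * z * (x ((n+1) mod N) - x n)"
      unfolding velocity[OF n] velocity[OF mod_less_divisor[OF N]] x_def
      by (simp add: power2_eq_square algebra_simps)
  qed
qed

lemma pencil_condition_of_damping_margin:
  fixes \<alpha> \<beta> \<gamma> T :: real
  assumes T: "T > 0" and margin: "1 / T \<le> \<gamma> / 2 + \<beta> + T * \<alpha>"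
  shows "2*(\<gamma>/T)*(\<gamma>/T - \<beta>*\<gamma>) \<le> \<gamma>\<^sup>2*(\<gamma>/T + 2*\<alpha>)"
proof -
  have "2 / T \<le> \<gamma> + 2*\<beta> + 2*T*\<alpha>"
    using margin by (simp add: field_simps)
  then have mono: "\<gamma>\<^sup>2 / T * (2 / T) \<le> \<gamma>\<^sup>2 / T * (\<gamma> + 2*\<beta> + 2*T*\<alpha>)"
    using T by (intro mult_left_mono) simp_all
  have "2*(\<gamma>/T)*(\<gamma>/T - \<beta>*\<gamma>) = \<gamma>\<^sup>2 / T * (2 / T) - 2*\<beta>*\<gamma>\<^sup>2 / T"
    using T by (simp add: field_simps power2_eq_square)
  also have "\<dots> \<le> \<gamma>\<^sup>2 / T * (\<gamma> + 2*\<beta> + 2*T*\<alpha>) - 2*\<beta>*\<gamma>\<^sup>2 / T"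
    using mono by (rule diff_right_mono)
  also have "\<dots> = \<gamma>\<^sup>2*(\<gamma>/T + 2*\<alpha>)"
    using T by (simp add: field_simps power2_eq_square)
  finally show ?thesis .
qed

theorem theorem3p2:
  fixes N :: nat and \<alpha> \<beta> \<gamma> T :: real
  assumes "N > 2" and "\<alpha> \<ge> 0" and "\<beta> \<ge> 0" and "\<gamma> > 0" and "T > 0"
    and "diagonalisable (map_mat complex_of_real (drift_matrix N \<alpha> \<beta> \<gamma> T))"
    and "card {z. eigenvalue (map_mat complex_of_real (drift_matrix N \<alpha> \<beta> \<gamma> T)) z} = 2 * N"
    and "\<gamma> / 2 + \<beta> + T * \<alpha> > 1 / T"
  shows "\<forall>z. eigenvalue (map_mat complex_of_real (drift_matrix N \<alpha> \<beta> \<gamma> T)) z \<longrightarrow> Re z \<le> 0"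
proof (intro allI impI)
  fix z assume "eigenvalue (map_mat complex_of_real (drift_matrix N \<alpha> \<beta> \<gamma> T)) z"
  then obtain x where "\<exists>n<N. x n \<noteq> 0"
    and "\<And>n. n < N \<Longrightarrow> z\<^sup>2 * x n = of_real (\<gamma>/T) * (x ((n+1) mod N) - x n)
        + of_real \<alpha> * (x ((n+1) mod N) - 2 * x n + x ((n+N-1) mod N))
        - of_real \<gamma> * z * x n + of_real \<beta> * z * (x ((n+1) mod N) - x n)"
    by (rule drift_matrix_eigenvalue_recurrence) blast
  then obtain d where disk: "(cmod d)\<^sup>2 \<le> - 2 * Re d"
    and pencil: "z\<^sup>2 + of_real \<gamma> * z = (of_real (\<gamma>/T) + of_real \<beta> * z) * d + of_real (2 * \<alpha> * Re d)"
    by (rule cyclic_recurrence_disk_quotient)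
  have cond: "2*(\<gamma>/T)*(\<gamma>/T - \<beta>*\<gamma>) \<le> \<gamma>\<^sup>2*(\<gamma>/T + 2*\<alpha>)"
    using assms(5,8) by (intro pencil_condition_of_damping_margin) auto
  have "\<gamma> \<ge> 0" "\<gamma>/T \<ge> 0" using assms(4,5) by simp_all
  from Re_nonpos_of_disk_pencil[OF this assms(2,3) cond disk pencil] show "Re z \<le> 0" .
qed

end
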